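(* Let $n,m$ be positive integers with $m+2\le n$. Then $\gamma_{gr}(P_n^m)=n-m$.
   Context: $P_n^m$ has vertex set $[n]$, distinct $i,j$ adjacent iff $|i-j|\le m$. $\gamma_{gr}$ is the Grundy domination number: the maximum length of a sequence $(v_1,\dots,v_k)$ of distinct vertices whose set is dominating and such that each $N[v_i]\setminus\bigcup_{j<i}N[v_j]$ is non-empty ($N[\cdot]$ the closed neighborhood). *)

theory Defs
  imports Main
begin

definition pm_adj :: "nat \<Rightarrow> nat \<Rightarrow> nat \<Rightarrow> nat \<Rightarrow> bool" where
  "pm_adj n m i j \<longleftrightarrow> i \<in> {1..n} \<and> j \<in> {1..n} \<and> i \<noteq> j \<and> (i - j \<le> m \<and> j - i \<le> m)"

definition pm_cnbhd :: "nat \<Rightarrow> nat \<Rightarrow> nat \<Rightarrow> nat set" where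
  "pm_cnbhd n m v = {v} \<union> {u. pm_adj n m v u}"

definition grundy_dom_seq :: "'a set \<Rightarrow> ('a \<Rightarrow> 'a set) \<Rightarrow> 'a list \<Rightarrow> bool" where
  "grundy_dom_seq V N vs \<longleftrightarrow>
     distinct vs \<and> set vs \<subseteq> V \<and>
     (\<Union>v\<in>set vs. N v) = V \<and>
     (\<forall>i < length vs. N (vs ! i) - (\<Union>j<i. N (vs ! j)) \<noteq> {})"

definition grundy_dom_num :: "'a set \<Rightarrow> ('a \<Rightarrow> 'a set) \<Rightarrow> nat" where
  "grundy_dom_num V N = Max (length ` {vs. grundy_dom_seq V N vs})"

definition gamma_gr_Pnm :: "nat \<Rightarrow> nat \<Rightarrow> nat" where
  "gamma_gr_Pnm n m = grundy_dom_num {1..n} (pm_cnbhd n m)"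

end

theory Submission
  imports Defs
begin

text \<open>The last vertex of a Grundy dominating sequence footprints some vertex \<open>u\<close>; by symmetry of
  adjacency no earlier vertex lies in \<open>N[u]\<close>, so the sequence has at most \<open>n - |N[u]| + 1\<close>
  vertices, which is at most \<open>n - m\<close> in \<open>P_n^m\<close> since every closed neighbourhood there has at
  least \<open>m + 1\<close> vertices. Conversely, in \<open>1, \<dots>, n - m\<close> each vertex \<open>i\<close> footprints \<open>i + m\<close>.\<close>

lemma grundy_dom_seq_length_le:
  assumes seq: "grundy_dom_seq V N vs" and "finite V"
    and N_subset: "\<And>v. v \<in> V \<Longrightarrow> N v \<subseteq> V"
    and N_sym: "\<And>u v. u \<in> V \<Longrightarrow> v \<in> V \<Longrightarrow> u \<in> N v \<longleftrightarrow> v \<in> N u"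
    and N_card: "\<And>v. v \<in> V \<Longrightarrow> d + 1 \<le> card (N v)"
  shows "length vs \<le> card V - d"
proof (cases "vs = []")
  case False
  have vs_V: "set vs \<subseteq> V"
    and footprint: "\<forall>i < length vs. N (vs ! i) - (\<Union>j<i. N (vs ! j)) \<noteq> {}"
    using seq unfolding grundy_dom_seq_def by auto
  define k where "k = length vs - 1"
  have k: "k < length vs" using False k_def by simp
  obtain u where u: "u \<in> N (vs ! k)" "u \<notin> (\<Union>j<k. N (vs ! j))" using footprint k by blast
  have "vs ! k \<in> V" using vs_V k nth_mem by blast
  then have u_V: "u \<in> V" using N_subset u(1) by blast
  have "set vs \<subseteq> (V - N u) \<union> {vs ! k}"
  proof
    fix x assume "x \<in> set vs"
    then obtain j where j: "j < length vs" "x = vs ! j" by (auto simp: in_set_conv_nth)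
    show "x \<in> (V - N u) \<union> {vs ! k}"
    proof (cases "j = k")
      case False
      with j k_def have "u \<notin> N x" using u(2) by auto
      then show ?thesis using N_sym[OF u_V] vs_V \<open>x \<in> set vs\<close> by blast
    qed (use j in auto)
  qed
  then have "card (set vs) \<le> card ((V - N u) \<union> {vs ! k})"
    using \<open>finite V\<close> by (intro card_mono) auto
  also have "\<dots> \<le> card (V - N u) + 1"
    using card_Un_le[of "V - N u" "{vs ! k}"] by simp
  moreover have "card (V - N u) = card V - card (N u)" "card (N u) \<le> card V"
    using N_subset[OF u_V] \<open>finite V\<close> by (auto simp: card_Diff_subset card_mono finite_subset)
  moreover have "length vs = card (set vs)"
    using seq distinct_card unfolding grundy_dom_seq_def by metis
  ultimately show ?thesis using N_card[OF u_V] by linarith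
qed simp

lemma grundy_dom_num_eqI:
  assumes "\<And>vs. grundy_dom_seq V N vs \<Longrightarrow> length vs \<le> k" and "grundy_dom_seq V N ws"
    and "length ws = k"
  shows "grundy_dom_num V N = k"
proof -
  let ?S = "length ` {vs. grundy_dom_seq V N vs}"
  have "?S \<subseteq> {..k}" using assms(1) by auto
  then have "finite ?S" by (rule finite_subset) simp
  then show ?thesis
    unfolding grundy_dom_num_def using assms by (intro Max_eqI) auto
qed

lemma pm_cnbhd_eq:
  assumes "v \<in> {1..n}"
  shows "pm_cnbhd n m v = {i \<in> {1..n}. i \<le> v + m \<and> v \<le> i + m}"
  using assms unfolding pm_cnbhd_def pm_adj_def by auto

lemma pm_cnbhd_subset: "v \<in> {1..n} \<Longrightarrow> pm_cnbhd n m v \<subseteq> {1..n}"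
  by (auto simp: pm_cnbhd_eq)

lemma pm_cnbhd_sym:
  "u \<in> {1..n} \<Longrightarrow> v \<in> {1..n} \<Longrightarrow> u \<in> pm_cnbhd n m v \<longleftrightarrow> v \<in> pm_cnbhd n m u"
  by (auto simp: pm_cnbhd_eq)

lemma card_pm_cnbhd_ge:
  assumes "u \<in> {1..n}" and "m < n"
  shows "m + 1 \<le> card (pm_cnbhd n m u)"
proof -
  define a where "a = min u (n - m)"
  have "{a..a + m} \<subseteq> pm_cnbhd n m u"
    using assms by (auto simp: pm_cnbhd_eq a_def)
  moreover have "finite (pm_cnbhd n m u)"
    using pm_cnbhd_subset[OF assms(1)] finite_subset by blast
  ultimately have "card {a..a + m} \<le> card (pm_cnbhd n m u)"
    by (intro card_mono)
  then show ?thesis by simp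
qed

lemma grundy_dom_seq_pm_upt:
  assumes "m < n"
  shows "grundy_dom_seq {1..n} (pm_cnbhd n m) [1..<n - m + 1]"
proof -
  let ?N = "pm_cnbhd n m" and ?vs = "[1..<n - m + 1]"
  have set_vs: "set ?vs = {1..n - m}" by (auto simp del: upt_Suc)
  have "x \<in> (\<Union>v\<in>{1..n - m}. ?N v)" if "x \<in> {1..n}" for x
  proof (cases "x \<le> n - m")
    case True
    have "x \<in> ?N x" using that by (simp add: pm_cnbhd_eq)
    then show ?thesis using True that by auto
  next
    case False
    then have "x \<in> ?N (n - m)" using that assms by (simp add: pm_cnbhd_eq)
    then show ?thesis using assms by force
  qed
  moreover have "?N v \<subseteq> {1..n}" if "v \<in> {1..n - m}" for v
    using that by (intro pm_cnbhd_subset) auto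
  ultimately have dominating: "(\<Union>v\<in>set ?vs. ?N v) = {1..n}"
    unfolding set_vs by blast
  have "i + 1 + m \<in> ?N (?vs ! i) - (\<Union>j<i. ?N (?vs ! j))" if "i < length ?vs" for i
  proof -
    have i: "i < n - m" using that by (simp del: upt_Suc)
    have vs_nth: "?vs ! j = j + 1" if "j \<le> i" for j
      using that i by (simp del: upt_Suc add: nth_upt)
    have "i + 1 + m \<in> ?N (i + 1)" using i by (simp add: pm_cnbhd_eq)
    moreover have "i + 1 + m \<notin> ?N (j + 1)" if "j < i" for j
      using that i by (simp add: pm_cnbhd_eq)
    ultimately show ?thesis using vs_nth by auto
  qed
  then have "\<forall>i < length ?vs. ?N (?vs ! i) - (\<Union>j<i. ?N (?vs ! j)) \<noteq> {}"
    by blast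
  moreover have "set ?vs \<subseteq> {1..n}" using set_vs by auto
  ultimately show ?thesis
    using dominating unfolding grundy_dom_seq_def by simp
qed

theorem corollary2:
  fixes n m :: nat
  assumes "0 < n" and "0 < m" and "m + 2 \<le> n"
  shows "gamma_gr_Pnm n m = n - m"
  unfolding gamma_gr_Pnm_def
proof (rule grundy_dom_num_eqI)
  have "m < n" using assms(3) by simp
  show "length vs \<le> n - m" if "grundy_dom_seq {1..n} (pm_cnbhd n m) vs" for vs
    using grundy_dom_seq_length_le[OF that, of m] pm_cnbhd_subset pm_cnbhd_sym
      card_pm_cnbhd_ge[OF _ \<open>m < n\<close>] by simp
  show "grundy_dom_seq {1..n} (pm_cnbhd n m) [1..<n - m + 1]"
    using grundy_dom_seq_pm_upt[OF \<open>m < n\<close>] .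
  show "length [1..<n - m + 1] = n - m" by (simp del: upt_Suc)
qed

end
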